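(* Let $\mu,\nu\in\mathcal{P}(\mathcal{X})$, $m>0$, take $m_1=m_2=m$ for the marginal cones (with $\mu(B_m)>0$, $\nu(B_m)>0$), let $\alpha$ be a tail function with $\alpha>0$, and let $\tilde\alpha$ be a tail function. For every $f\in\mathcal{F}^{\mu\otimes\nu}_{\alpha,0}$, \[ \int f(\cdot,y)\,\nu(dy)\in\mathcal{F}^{\mu}_{\alpha,\tilde\alpha}\quad\text{and}\quad\int f(x,\cdot)\,\mu(dx)\in\mathcal{F}^{\nu}_{\alpha,\tilde\alpha}. \] Moreover, identifying a function $g$ on $\mathcal{X}$ with the function $(x,y)\mapsto g(x)$ on $\mathcal{X}\times\mathcal{X}$, we have $\mathcal{G}^{\mu}_{\alpha,\tilde\alpha}\subseteq\mathcal{G}^{\mu\otimes\nu}_{\alpha,0}$ and $d_{\mathcal{G}^{\mu\otimes\nu}_{\alpha,0}}(g,\tilde g)\le d_{\mathcal{G}^{\mu}_{\alpha,\tilde\alpha}}(g,\tilde g)$ for all $g,\tilde g\in\mathcal{G}^{\mu}_{\alpha,\tilde\alpha}$; analogously (identifying $g$ with $(x,y)\mapsto g(y)$) $\mathcal{G}^{\nu}_{\alpha,\tilde\alpha}\subseteq\mathcal{G}^{\mu\otimes\nu}_{\alpha,0}$ and $d_{\mathcal{G}^{\mu\otimes\nu}_{\alpha,0}}(g,\tilde g)\le d_{\mathcal{G}^{\nu}_{\alpha,\tilde\alpha}}(g,\tilde g)$ for $g,\tilde g\in\mathcal{G}^{\nu}_{\alpha,\tilde\alpha}$.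
   Context: $\mathcal{X}$ is a Polish space with metric $d_{\mathcal{X}}$, $x_0$ fixed, $B_r=\{x:d_{\mathcal{X}}(x_0,x)\le r\}$, $B_r^{\mathsf c}=\mathcal{X}\setminus B_r$. On $\mathcal{X}\times\mathcal{X}$ use the metric $\max\{d_{\mathcal{X}}(x,\tilde x),d_{\mathcal{X}}(y,\tilde y)\}$ and $\bar B_r=\{\bar x\in\mathcal{X}\times\mathcal{X}: \text{distance from }(x_0,x_0)\le r\}$. A tail function is a non-increasing $\alpha:(0,\infty)\to[0,\infty)$ with $\lim_{r\to\infty}\alpha(r)=0$. For $\rho\in\mathcal{P}(\mathcal{X})$: $\mathcal{F}^{\rho}_{\alpha,\tilde\alpha}$ is the set of $f\in L^2(\rho)$ with $f\mathbf 1_{B_{m_2}}\ge0$ $\rho$-a.s., $\int_{B_r^{\mathsf c}}f_+\,d\rho\le\alpha(r)\int f\,d\rho$ for all $r\ge m_1$, $\int_{B_r^{\mathsf c}}f_-\,d\rho\le\tilde\alpha(r)\int f\,d\rho$ for all $r\ge m_2$; $\mathcal{G}^{\rho}_{\alpha,\tilde\alpha}=\{g\in L^2(\rho):\int fg\,d\rho\ge0\ \forall f\in\mathcal{F}^{\rho}_{\alpha,\tilde\alpha}\}$. On the product: $\mathcal{F}^{\mu\otimes\nu}_{\alpha,0}=\{f\in L^2(\mu\otimes\nu): f\ge0,\ \int_{\bar B_r^{\mathsf c}}f\,d\mu\otimes\nu\le\alpha(r)\int f\,d\mu\otimes\nu\text{ for all }r\ge m\}$ and $\mathcal{G}^{\mu\otimes\nu}_{\alpha,0}=\{g\in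 L^2(\mu\otimes\nu):\int fg\,d\mu\otimes\nu\ge0\ \forall f\in\mathcal{F}^{\mu\otimes\nu}_{\alpha,0}\}$. Hilbert's metric for a cone $C$: $f\le_C g$ iff $g-f\in C$; $f\sim_C g$ iff $f\le_C bg$ and $g\le_C b'f$ for some $b,b'>0$; $M(f,g)=\inf\{b>0:bg-f\in C\}$, $m(f,g)=\sup\{a>0:f-ag\in C\}$; $d_C(f,g)=\log(M/m)$ if $f\sim_C g$, $g\ne0$, and $\infty$ otherwise. *)

theory Defs
  imports "HOL-Probability.Probability"
begin

definition tail_function :: "(real \<Rightarrow> real) \<Rightarrow> bool" where
  "tail_function \<alpha> \<longleftrightarrow>
     (\<forall>r s. 0 < r \<longrightarrow> r \<le> s \<longrightarrow> \<alpha> s \<le> \<alpha> r) \<and>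
     (\<forall>r>0. 0 \<le> \<alpha> r) \<and> (\<alpha> \<longlongrightarrow> 0) at_top"

text \<open>Membership in L2 (functions as representatives of L2 classes).\<close>
definition L2 :: "'b measure \<Rightarrow> ('b \<Rightarrow> real) \<Rightarrow> bool" where
  "L2 M f \<longleftrightarrow> f \<in> borel_measurable M \<and> integrable M (\<lambda>x. (f x)\<^sup>2)"

text \<open>Marginal cone F^rho_{alpha,alpha~} with m1 = m2 = m; ball B_r around x0.\<close>
definition Fcone :: "'a::metric_space measure \<Rightarrow> 'a \<Rightarrow> real \<Rightarrow> (real \<Rightarrow> real) \<Rightarrow> (real \<Rightarrow> real)
     \<Rightarrow> ('a \<Rightarrow> real) set" where
  "Fcone \<rho> x0 m \<alpha> \<alpha>' = {f. L2 \<rho> f \<and>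
     (AE x in \<rho>. dist x0 x \<le> m \<longrightarrow> 0 \<le> f x) \<and>
     (\<forall>r\<ge>m. (\<integral>x. indicator {x. r < dist x0 x} x * max (f x) 0 \<partial>\<rho>)
              \<le> \<alpha> r * (\<integral>x. f x \<partial>\<rho>)) \<and>
     (\<forall>r\<ge>m. (\<integral>x. indicator {x. r < dist x0 x} x * max (- f x) 0 \<partial>\<rho>)
              \<le> \<alpha>' r * (\<integral>x. f x \<partial>\<rho>))}"

definition Gcone :: "'a::metric_space measure \<Rightarrow> 'a \<Rightarrow> real \<Rightarrow> (real \<Rightarrow> real) \<Rightarrow> (real \<Rightarrow> real)
     \<Rightarrow> ('a \<Rightarrow> real) set" where
  "Gcone \<rho> x0 m \<alpha> \<alpha>' = {g. L2 \<rho> g \<and>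
     (\<forall>f\<in>Fcone \<rho> x0 m \<alpha> \<alpha>'. 0 \<le> (\<integral>x. f x * g x \<partial>\<rho>))}"

text \<open>Product cone; the ball uses the max-metric on X x X.\<close>
definition Fcone_prod :: "('a::metric_space \<times> 'a) measure \<Rightarrow> 'a \<Rightarrow> real \<Rightarrow> (real \<Rightarrow> real)
     \<Rightarrow> ('a \<times> 'a \<Rightarrow> real) set" where
  "Fcone_prod P x0 m \<alpha> = {f. L2 P f \<and> (AE z in P. 0 \<le> f z) \<and>
     (\<forall>r\<ge>m. (\<integral>z. indicator {(x,y). r < max (dist x0 x) (dist x0 y)} z * f z \<partial>P)
              \<le> \<alpha> r * (\<integral>z. f z \<partial>P))}"

definition Gcone_prod :: "('a::metric_space \<times> 'a) measure \<Rightarrow> 'a \<Rightarrow> real \<Rightarrow> (real \<Rightarrow> real)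
     \<Rightarrow> ('a \<times> 'a \<Rightarrow> real) set" where
  "Gcone_prod P x0 m \<alpha> = {g. L2 P g \<and>
     (\<forall>f\<in>Fcone_prod P x0 m \<alpha>. 0 \<le> (\<integral>z. f z * g z \<partial>P))}"

text \<open>Hilbert's projective metric of a cone C of functions in L2(M);
  "g \<noteq> 0" is read in L2(M), i.e. g is not M-a.e. zero.\<close>
definition cone_equiv :: "('b \<Rightarrow> real) set \<Rightarrow> ('b \<Rightarrow> real) \<Rightarrow> ('b \<Rightarrow> real) \<Rightarrow> bool" where
  "cone_equiv C f g \<longleftrightarrow> (\<exists>b>0. \<exists>b'>0. (\<lambda>x. b * g x - f x) \<in> C \<and> (\<lambda>x. b' * f x - g x) \<in> C)"

definition cone_M :: "('b \<Rightarrow> real) set \<Rightarrow> ('b \<Rightarrow> real) \<Rightarrow> ('b \<Rightarrow> real) \<Rightarrow> real" where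
  "cone_M C f g = Inf {b. 0 < b \<and> (\<lambda>x. b * g x - f x) \<in> C}"

definition cone_m :: "('b \<Rightarrow> real) set \<Rightarrow> ('b \<Rightarrow> real) \<Rightarrow> ('b \<Rightarrow> real) \<Rightarrow> real" where
  "cone_m C f g = Sup {a. 0 < a \<and> (\<lambda>x. f x - a * g x) \<in> C}"

definition hilbert_dist :: "'b measure \<Rightarrow> ('b \<Rightarrow> real) set \<Rightarrow> ('b \<Rightarrow> real) \<Rightarrow> ('b \<Rightarrow> real) \<Rightarrow> ereal" where
  "hilbert_dist M C f g =
     (if cone_equiv C f g \<and> \<not> (AE x in M. g x = 0)
      then ereal (ln (cone_M C f g / cone_m C f g)) else \<infinity>)"

end

theory Submission
  imports Defs
begin

(*
  The tail of a marginal of f is dominated by the tail of f itself, and Jensen's inequality keeps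
  the marginal in L2, so marginals map the product cone into the marginal cones. Dually, by Fubini, pulling g back along a
  projection maps the marginal dual cone into the product dual cone. Such a linear map between
  cones can only shrink the upper constant M and enlarge the lower constant m of Hilbert's metric,
  provided the target cone is pointed. Pointedness of the product dual cone is where \<alpha> > 0 and
  the positive mass of the central balls enter: adding a large multiple of the indicator of the
  central ball turns any nonnegative L2 function supported in a ball into a member of the product
  cone, so a function orthogonal to that cone vanishes on every ball.
*)

section \<open>L2 functions\<close>

lemma L2_integrable_mult:
  fixes f g :: "'b \<Rightarrow> real"
  assumes "L2 M f" "L2 M g"
  shows "integrable M (\<lambda>x. f x * g x)"
proof (rule Bochner_Integration.integrable_bound)
  show "integrable M (\<lambda>x. (f x)\<^sup>2 + (g x)\<^sup>2)"
    using assms unfolding L2_def by auto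
  show "(\<lambda>x. f x * g x) \<in> borel_measurable M"
    using assms unfolding L2_def by auto
  have "\<bar>f x * g x\<bar> \<le> (f x)\<^sup>2 + (g x)\<^sup>2" for x
  proof -
    have "2 * \<bar>f x\<bar> * \<bar>g x\<bar> \<le> (f x)\<^sup>2 + (g x)\<^sup>2"
      using sum_squares_bound[of "\<bar>f x\<bar>" "\<bar>g x\<bar>"] by simp
    then show ?thesis
      unfolding abs_mult using mult_nonneg_nonneg[OF abs_ge_zero abs_ge_zero, of "f x" "g x"]
      by linarith
  qed
  then show "AE x in M. norm (f x * g x) \<le> norm ((f x)\<^sup>2 + (g x)\<^sup>2)"
    by simp
qed

lemma L2_add:
  fixes f g :: "'b \<Rightarrow> real"
  assumes "L2 M f" "L2 M g"
  shows "L2 M (\<lambda>x. f x + g x)"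
proof -
  have "(\<lambda>x. (f x + g x)\<^sup>2) = (\<lambda>x. (f x)\<^sup>2 + (g x)\<^sup>2 + 2 * (f x * g x))"
    by (simp add: power2_sum mult.assoc)
  then show ?thesis
    using assms L2_integrable_mult[OF assms] unfolding L2_def by auto
qed

lemma L2_cmult:
  fixes f :: "'b \<Rightarrow> real"
  assumes "L2 M f"
  shows "L2 M (\<lambda>x. c * f x)"
  using assms unfolding L2_def by (auto simp: power_mult_distrib)

lemma L2_dominated:
  fixes f g :: "'b \<Rightarrow> real"
  assumes "L2 M g" "f \<in> borel_measurable M" "\<And>x. \<bar>f x\<bar> \<le> \<bar>g x\<bar>"
  shows "L2 M f"
proof -
  have "integrable M (\<lambda>x. (f x)\<^sup>2)"
    by (rule Bochner_Integration.integrable_bound[where f="\<lambda>x. (g x)\<^sup>2"])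
       (use assms in \<open>auto simp: L2_def abs_le_square_iff\<close>)
  then show ?thesis
    using assms(2) unfolding L2_def by simp
qed

lemma (in finite_measure) L2_indicator:
  assumes "A \<in> sets M"
  shows "L2 M (indicator A)"
proof -
  have "(\<lambda>x. (indicator A x :: real)\<^sup>2) = indicator A"
    by (auto simp: indicator_def)
  then show ?thesis
    using assms unfolding L2_def by (simp add: emeasure_finite less_top[symmetric])
qed

lemma (in finite_measure) L2_imp_integrable:
  "L2 M f \<Longrightarrow> integrable M f"
  unfolding L2_def using square_integrable_imp_integrable by blast

section \<open>Dual cones and Hilbert's projective metric\<close>

definition dual_cone :: "'b measure \<Rightarrow> ('b \<Rightarrow> real) set \<Rightarrow> ('b \<Rightarrow> real) set" where
  "dual_cone M F = {g. L2 M g \<and> (\<forall>f\<in>F. 0 \<le> (\<integral>x. f x * g x \<partial>M))}"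

lemma Gcone_eq_dual_cone: "Gcone \<rho> x0 m \<alpha> \<alpha>' = dual_cone \<rho> (Fcone \<rho> x0 m \<alpha> \<alpha>')"
  unfolding Gcone_def dual_cone_def ..

lemma Gcone_prod_eq_dual_cone: "Gcone_prod P x0 m \<alpha> = dual_cone P (Fcone_prod P x0 m \<alpha>)"
  unfolding Gcone_prod_def dual_cone_def ..

lemma dual_cone_cmult:
  assumes "g \<in> dual_cone M F" "0 \<le> c"
  shows "(\<lambda>x. c * g x) \<in> dual_cone M F"
  using assms L2_cmult unfolding dual_cone_def by (auto simp: mult.left_commute)

lemma dual_cone_add:
  assumes "g \<in> dual_cone M F" "h \<in> dual_cone M F" "\<And>f. f \<in> F \<Longrightarrow> L2 M f"
  shows "(\<lambda>x. g x + h x) \<in> dual_cone M F"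
  unfolding dual_cone_def
proof (intro CollectI conjI ballI)
  show "L2 M (\<lambda>x. g x + h x)"
    using assms(1,2) L2_add unfolding dual_cone_def by blast
  fix f assume "f \<in> F"
  then have "(\<integral>x. f x * (g x + h x) \<partial>M) = (\<integral>x. f x * g x \<partial>M) + (\<integral>x. f x * h x \<partial>M)"
    unfolding distrib_left using assms(1,2) assms(3)[OF \<open>f \<in> F\<close>] unfolding dual_cone_def
    by (intro Bochner_Integration.integral_add L2_integrable_mult) auto
  then show "0 \<le> (\<integral>x. f x * (g x + h x) \<partial>M)"
    using \<open>f \<in> F\<close> assms(1,2) unfolding dual_cone_def by auto
qed

lemma dual_cone_orthogonal:
  assumes "g \<in> dual_cone M F" "(\<lambda>x. - g x) \<in> dual_cone M F" "f \<in> F"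
  shows "(\<integral>x. f x * g x \<partial>M) = 0"
proof -
  have "0 \<le> (\<integral>x. f x * g x \<partial>M)" "0 \<le> (\<integral>x. f x * - g x \<partial>M)"
    using assms unfolding dual_cone_def by auto
  then show ?thesis
    by simp
qed

lemma Gcone_cmult: "g \<in> Gcone \<rho> x0 m \<alpha> \<alpha>' \<Longrightarrow> 0 < c \<Longrightarrow> (\<lambda>x. c * g x) \<in> Gcone \<rho> x0 m \<alpha> \<alpha>'"
  unfolding Gcone_eq_dual_cone by (simp add: dual_cone_cmult)

lemma Gcone_prod_cmult:
  "g \<in> Gcone_prod P x0 m \<alpha> \<Longrightarrow> 0 < c \<Longrightarrow> (\<lambda>z. c * g z) \<in> Gcone_prod P x0 m \<alpha>"
  unfolding Gcone_prod_eq_dual_cone by (simp add: dual_cone_cmult)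

lemma Gcone_prod_add:
  "g \<in> Gcone_prod P x0 m \<alpha> \<Longrightarrow> h \<in> Gcone_prod P x0 m \<alpha> \<Longrightarrow> (\<lambda>z. g z + h z) \<in> Gcone_prod P x0 m \<alpha>"
  unfolding Gcone_prod_eq_dual_cone by (rule dual_cone_add) (simp_all add: Fcone_prod_def)

lemma cone_lower_le_upper:
  fixes C :: "('b \<Rightarrow> real) set"
  assumes cmult: "\<And>h c. h \<in> C \<Longrightarrow> 0 < c \<Longrightarrow> (\<lambda>x. c * h x) \<in> C"
    and add: "\<And>h k. h \<in> C \<Longrightarrow> k \<in> C \<Longrightarrow> (\<lambda>x. h x + k x) \<in> C"
    and not_neg: "(\<lambda>x. - g x) \<notin> C"
    and "(\<lambda>x. f x - a * g x) \<in> C" "(\<lambda>x. b * g x - f x) \<in> C"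
  shows "a \<le> b"
proof (rule ccontr)
  assume "\<not> a \<le> b"
  have "(\<lambda>x. (b * g x - f x) + (f x - a * g x)) \<in> C"
    using assms(4,5) by (rule add[rotated])
  then have "(\<lambda>x. 1 / (a - b) * ((b * g x - f x) + (f x - a * g x))) \<in> C"
    using \<open>\<not> a \<le> b\<close> by (intro cmult) auto
  also have "(\<lambda>x. 1 / (a - b) * ((b * g x - f x) + (f x - a * g x))) = (\<lambda>x. - g x)"
    using \<open>\<not> a \<le> b\<close> by (auto simp: field_simps)
  finally show False
    using not_neg by contradiction
qed

lemma Inf_div_Sup_le:
  fixes Sm Tm SM TM :: "real set"
  assumes "Sm \<subseteq> Tm" "SM \<subseteq> TM" "a \<in> Sm" "0 < a" "SM \<noteq> {}"
    and below: "\<And>a b. a \<in> Tm \<Longrightarrow> b \<in> TM \<Longrightarrow> a \<le> b"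
  shows "0 < Inf TM / Sup Tm" "Inf TM / Sup Tm \<le> Inf SM / Sup Sm"
proof -
  obtain b where "b \<in> TM"
    using assms(2,5) by blast
  then have bdd_Tm: "bdd_above Tm"
    using below by (intro bdd_aboveI) blast
  have bdd_TM: "bdd_below TM"
    using assms(1,3) below by (intro bdd_belowI) blast
  have "a \<le> Inf TM"
    using assms(1,3) \<open>b \<in> TM\<close> below by (intro cInf_greatest) blast+
  moreover have "Inf TM \<le> Inf SM"
    using assms(2,5) bdd_TM by (intro cInf_superset_mono)
  moreover have "a \<le> Sup Sm"
    using assms(1,3) bdd_above_mono[OF bdd_Tm] by (intro cSup_upper) auto
  moreover have "Sup Sm \<le> Sup Tm"
    using assms(1,3) bdd_Tm by (intro cSup_subset_mono) auto
  ultimately show "0 < Inf TM / Sup Tm" "Inf TM / Sup Tm \<le> Inf SM / Sup Sm"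
    using \<open>0 < a\<close> by (simp_all add: frac_le)
qed

lemma hilbert_dist_pullback_le:
  fixes C :: "('b \<Rightarrow> real) set" and D :: "('c \<Rightarrow> real) set" and \<pi> :: "'c \<Rightarrow> 'b"
  assumes lift: "\<And>h. h \<in> C \<Longrightarrow> (\<lambda>z. h (\<pi> z)) \<in> D"
    and C_cmult: "\<And>h c. h \<in> C \<Longrightarrow> 0 < c \<Longrightarrow> (\<lambda>x. c * h x) \<in> C"
    and D_cmult: "\<And>h c. h \<in> D \<Longrightarrow> 0 < c \<Longrightarrow> (\<lambda>z. c * h z) \<in> D"
    and D_add: "\<And>h k. h \<in> D \<Longrightarrow> k \<in> D \<Longrightarrow> (\<lambda>z. h z + k z) \<in> D"
    and D_pointed: "\<And>h. h \<in> D \<Longrightarrow> (\<lambda>z. - h z) \<in> D \<Longrightarrow> AE z in N. h z = 0"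
    and "g' \<in> C"
    and null: "(AE z in N. g' (\<pi> z) = 0) \<Longrightarrow> AE x in M. g' x = 0"
  shows "hilbert_dist N D (\<lambda>z. g (\<pi> z)) (\<lambda>z. g' (\<pi> z)) \<le> hilbert_dist M C g g'"
proof (cases "cone_equiv C g g' \<and> \<not> (AE x in M. g' x = 0)")
  case False
  then have "hilbert_dist M C g g' = \<infinity>"
    unfolding hilbert_dist_def by (simp only: False if_False)
  then show ?thesis
    by simp
next
  case True
  then obtain b b' where b: "0 < b" "(\<lambda>x. b * g' x - g x) \<in> C"
    and b': "0 < b'" "(\<lambda>x. b' * g x - g' x) \<in> C" and nonzero: "\<not> (AE x in M. g' x = 0)"
    unfolding cone_equiv_def by blast
  have nonzero_N: "\<not> (AE z in N. g' (\<pi> z) = 0)"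
    using null nonzero by blast
  then have not_neg: "(\<lambda>z. - g' (\<pi> z)) \<notin> D"
    using D_pointed lift[OF \<open>g' \<in> C\<close>] by blast
  have equiv_N: "cone_equiv D (\<lambda>z. g (\<pi> z)) (\<lambda>z. g' (\<pi> z))"
    using lift[OF b(2)] lift[OF b'(2)] b(1) b'(1) unfolding cone_equiv_def by blast
  have "(\<lambda>x. 1 / b' * (b' * g x - g' x)) \<in> C"
    using b' by (intro C_cmult) auto
  also have "(\<lambda>x. 1 / b' * (b' * g x - g' x)) = (\<lambda>x. g x - 1 / b' * g' x)"
    using b'(1) by (auto simp: field_simps)
  finally have lower: "(\<lambda>x. g x - 1 / b' * g' x) \<in> C" .
  define SM where "SM = {\<beta>. 0 < \<beta> \<and> (\<lambda>x. \<beta> * g' x - g x) \<in> C}"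
  define Sm where "Sm = {a. 0 < a \<and> (\<lambda>x. g x - a * g' x) \<in> C}"
  define TM where "TM = {\<beta>. 0 < \<beta> \<and> (\<lambda>z. \<beta> * g' (\<pi> z) - g (\<pi> z)) \<in> D}"
  define Tm where "Tm = {a. 0 < a \<and> (\<lambda>z. g (\<pi> z) - a * g' (\<pi> z)) \<in> D}"
  have "SM \<subseteq> TM" "Sm \<subseteq> Tm"
    unfolding SM_def TM_def Sm_def Tm_def using lift by auto
  moreover have "1 / b' \<in> Sm" "b \<in> SM"
    unfolding Sm_def SM_def using lower b b'(1) by auto
  moreover have "a \<le> \<beta>" if "a \<in> Tm" "\<beta> \<in> TM" for a \<beta>
  proof (rule cone_lower_le_upper[where C=D])
    show "(\<lambda>z. g (\<pi> z) - a * g' (\<pi> z)) \<in> D" "(\<lambda>z. \<beta> * g' (\<pi> z) - g (\<pi> z)) \<in> D"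
      using that unfolding Tm_def TM_def by auto
  qed (use D_cmult D_add not_neg in auto)
  ultimately have "0 < Inf TM / Sup Tm" "Inf TM / Sup Tm \<le> Inf SM / Sup Sm"
    using Inf_div_Sup_le[of Sm Tm SM TM "1 / b'"] b'(1) by auto
  then have "ln (Inf TM / Sup Tm) \<le> ln (Inf SM / Sup Sm)"
    by simp
  then show ?thesis
    using True equiv_N nonzero_N
    by (simp add: hilbert_dist_def cone_M_def cone_m_def SM_def Sm_def TM_def Tm_def)
qed

section \<open>Pointedness of the product dual cone\<close>

lemma tail_function_antimono:
  "tail_function \<alpha> \<Longrightarrow> 0 < r \<Longrightarrow> r \<le> s \<Longrightarrow> \<alpha> s \<le> \<alpha> r"
  unfolding tail_function_def by blast

lemma tail_function_nonneg:
  "tail_function \<alpha> \<Longrightarrow> 0 < r \<Longrightarrow> 0 \<le> \<alpha> r"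
  unfolding tail_function_def by blast

definition prod_ball :: "'a::metric_space \<Rightarrow> real \<Rightarrow> ('a \<times> 'a) set" where
  "prod_ball x0 r = {z. max (dist x0 (fst z)) (dist x0 (snd z)) \<le> r}"

lemma prod_ball_swap: "(snd z, fst z) \<in> prod_ball x0 r \<longleftrightarrow> z \<in> prod_ball x0 r"
  by (auto simp: prod_ball_def)

lemma Fcone_prod_iff:
  "f \<in> Fcone_prod P x0 m \<alpha> \<longleftrightarrow> L2 P f \<and> (AE z in P. 0 \<le> f z) \<and>
     (\<forall>r\<ge>m. (\<integral>z. indicator (- prod_ball x0 r) z * f z \<partial>P) \<le> \<alpha> r * (\<integral>z. f z \<partial>P))"
proof -
  have "{(x, y). r < max (dist x0 x) (dist x0 y)} = - prod_ball x0 r" for r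
    by (auto simp: prod_ball_def)
  then show ?thesis
    unfolding Fcone_prod_def by simp
qed

lemma Fcone_prod_bump:
  fixes P :: "('a::metric_space \<times> 'a) measure"
  assumes "finite_measure P" "space P = UNIV" "\<And>r. prod_ball x0 r \<in> sets P"
    and "tail_function \<alpha>" "0 < m" "m \<le> R"
    and u: "L2 P u" "\<And>z. 0 \<le> u z" "\<And>z. z \<notin> prod_ball x0 R \<Longrightarrow> u z = 0"
    and K: "0 \<le> K" "(\<integral>z. u z \<partial>P) \<le> \<alpha> R * K * measure P (prod_ball x0 m)"
  shows "(\<lambda>z. u z + K * indicator (prod_ball x0 m) z) \<in> Fcone_prod P x0 m \<alpha>"
proof -
  interpret finite_measure P by fact
  define p where "p = measure P (prod_ball x0 m)"
  note [measurable] = assms(3)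
  have [measurable]: "- prod_ball x0 r \<in> sets P" for r
    using sets.compl_sets[OF assms(3)] assms(2) by (simp add: Compl_eq_Diff_UNIV)
  have int_u: "integrable P u"
    using u(1) by (rule L2_imp_integrable)
  have L2_bump: "L2 P (\<lambda>z. u z + K * indicator (prod_ball x0 m) z)"
    by (intro L2_add L2_cmult L2_indicator u(1)) measurable
  have int_bump: "(\<integral>z. u z + K * indicator (prod_ball x0 m) z \<partial>P) = (\<integral>z. u z \<partial>P) + K * p"
  proof -
    have "integrable P (indicator (prod_ball x0 m) :: _ \<Rightarrow> real)"
      by (intro integrable_real_indicator) (auto simp: emeasure_finite less_top[symmetric])
    then show ?thesis
      using int_u by (simp add: p_def)
  qed
  have tail: "(\<integral>z. indicator (- prod_ball x0 r) z * (u z + K * indicator (prod_ball x0 m) z) \<partial>P)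
      \<le> \<alpha> r * ((\<integral>z. u z \<partial>P) + K * p)" if "m \<le> r" for r
  proof -
    have "0 < r" "0 \<le> \<alpha> r" "0 \<le> p"
      using that assms(4,5) tail_function_nonneg by (auto simp: p_def)
    have ball_mono: "prod_ball x0 m \<subseteq> prod_ball x0 r"
      using that by (auto simp: prod_ball_def)
    have "(\<integral>z. indicator (- prod_ball x0 r) z * (u z + K * indicator (prod_ball x0 m) z) \<partial>P)
        = (\<integral>z. indicator (- prod_ball x0 r) z * u z \<partial>P)"
      using ball_mono by (intro Bochner_Integration.integral_cong) (auto split: split_indicator)
    also have "\<dots> \<le> \<alpha> r * K * p"
    proof (cases "r < R")
      case True
      have "(\<integral>z. indicator (- prod_ball x0 r) z * u z \<partial>P) \<le> (\<integral>z. u z \<partial>P)"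
        using int_u integrable_mult_indicator[of "- prod_ball x0 r" P u] u(2)
        by (intro integral_mono) (auto split: split_indicator)
      also have "\<dots> \<le> \<alpha> R * K * p"
        using K(2) by (simp add: p_def)
      also have "\<dots> \<le> \<alpha> r * K * p"
        using tail_function_antimono[OF assms(4) \<open>0 < r\<close>] True K(1) \<open>0 \<le> p\<close>
        by (intro mult_right_mono) auto
      finally show ?thesis .
    next
      case False
      then have "u z = 0" if "z \<notin> prod_ball x0 r" for z
        using that by (intro u(3)) (auto simp: prod_ball_def)
      then have "(\<integral>z. indicator (- prod_ball x0 r) z * u z \<partial>P) = 0"
        by (intro integral_eq_zero_AE AE_I2) (auto split: split_indicator)
      then show ?thesis
        using \<open>0 \<le> \<alpha> r\<close> K(1) \<open>0 \<le> p\<close> by simp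
    qed
    also have "\<dots> \<le> \<alpha> r * ((\<integral>z. u z \<partial>P) + K * p)"
      using \<open>0 \<le> \<alpha> r\<close> u(2) by (simp add: distrib_left mult.assoc)
    finally show ?thesis .
  qed
  show ?thesis
    unfolding Fcone_prod_iff using L2_bump tail int_bump u(2) K(1)
    by (simp add: p_def)
qed

lemma AE_zero_if_orthogonal_Fcone_prod:
  fixes P :: "('a::metric_space \<times> 'a) measure"
  assumes "finite_measure P" "space P = UNIV" "\<And>r. prod_ball x0 r \<in> sets P"
    and "tail_function \<alpha>" "\<forall>r>0. 0 < \<alpha> r" "0 < m" "0 < measure P (prod_ball x0 m)" "L2 P h"
    and orth: "\<And>f. f \<in> Fcone_prod P x0 m \<alpha> \<Longrightarrow> (\<integral>z. f z * h z \<partial>P) = 0"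
  shows "AE z in P. h z = 0"
proof -
  interpret finite_measure P by fact
  define p where "p = measure P (prod_ball x0 m)"
  note [measurable] = assms(3)
  have [measurable]: "h \<in> borel_measurable P"
    using \<open>L2 P h\<close> unfolding L2_def by simp
  have L2_ball: "L2 P (indicator (prod_ball x0 m))"
    by (intro L2_indicator) measurable
  have "0 \<le> \<alpha> m * p"
    using assms(5,6) by (simp add: p_def less_imp_le)
  \<comment> \<open>the indicator of the central ball is the bump with \<open>u = 0\<close>, \<open>K = 1\<close>\<close>
  then have orth_ball: "(\<integral>z. indicator (prod_ball x0 m) z * h z \<partial>P) = 0"
    using orth[OF Fcone_prod_bump[OF assms(1-4,6) order_refl, of "\<lambda>_. 0" 1]]
    by (simp add: L2_def p_def)
  have orth_local: "(\<integral>z. u z * h z \<partial>P) = 0"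
    if "m \<le> R" "L2 P u" "\<And>z. 0 \<le> u z" "\<And>z. z \<notin> prod_ball x0 R \<Longrightarrow> u z = 0" for R u
  proof -
    have "0 < \<alpha> R * p"
      using assms(5,6,7) that(1) by (simp add: p_def)
    define K where "K = (\<integral>z. u z \<partial>P) / (\<alpha> R * p)"
    have "0 \<le> K" "(\<integral>z. u z \<partial>P) \<le> \<alpha> R * K * p"
      using \<open>0 < \<alpha> R * p\<close> that(3) by (auto simp: K_def)
    then have "(\<lambda>z. u z + K * indicator (prod_ball x0 m) z) \<in> Fcone_prod P x0 m \<alpha>"
      using that by (intro Fcone_prod_bump[OF assms(1-4,6)]) (auto simp: p_def)
    then have "0 = (\<integral>z. (u z + K * indicator (prod_ball x0 m) z) * h z \<partial>P)"
      by (simp add: orth)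
    also have "\<dots> = (\<integral>z. u z * h z \<partial>P) + K * (\<integral>z. indicator (prod_ball x0 m) z * h z \<partial>P)"
      using L2_integrable_mult[OF that(2) \<open>L2 P h\<close>] L2_integrable_mult[OF L2_ball \<open>L2 P h\<close>]
      by (simp add: distrib_right mult.assoc)
    finally show ?thesis
      using orth_ball by simp
  qed
  have zero_on_ball: "AE z in P. z \<in> prod_ball x0 R \<longrightarrow> h z = 0" if "m \<le> R" for R
  proof -
    define u where "u z = indicator (prod_ball x0 R) z * max (h z) 0" for z
    define v where "v z = indicator (prod_ball x0 R) z * max (- h z) 0" for z
    have "u \<in> borel_measurable P"
      unfolding u_def[abs_def] by measurable
    moreover have "v \<in> borel_measurable P"
      unfolding v_def[abs_def] by measurable
    moreover have "\<bar>u z\<bar> \<le> \<bar>h z\<bar>" "\<bar>v z\<bar> \<le> \<bar>h z\<bar>" for z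
      by (auto simp: u_def v_def split: split_indicator)
    ultimately have "L2 P u" "L2 P v"
      by (simp_all add: L2_dominated[OF \<open>L2 P h\<close>])
    have "(\<integral>z. u z * h z \<partial>P) = 0"
      by (rule orth_local[OF that \<open>L2 P u\<close>]) (auto simp: u_def split: split_indicator)
    moreover have "(\<integral>z. v z * h z \<partial>P) = 0"
      by (rule orth_local[OF that \<open>L2 P v\<close>]) (auto simp: v_def split: split_indicator)
    moreover have "(\<lambda>z. indicator (prod_ball x0 R) z * (h z)\<^sup>2) = (\<lambda>z. u z * h z - v z * h z)"
      by (simp add: fun_eq_iff u_def v_def power2_eq_square max_def split: split_indicator)
    ultimately have "(\<integral>z. indicator (prod_ball x0 R) z * (h z)\<^sup>2 \<partial>P) = 0"
      using L2_integrable_mult[OF \<open>L2 P u\<close> \<open>L2 P h\<close>] L2_integrable_mult[OF \<open>L2 P v\<close> \<open>L2 P h\<close>]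
      by simp
    moreover have "integrable P (\<lambda>z. indicator (prod_ball x0 R) z * (h z)\<^sup>2)"
      using \<open>L2 P h\<close> integrable_mult_indicator[of "prod_ball x0 R" P "\<lambda>z. (h z)\<^sup>2"]
      by (simp add: L2_def)
    ultimately have "AE z in P. indicator (prod_ball x0 R) z * (h z)\<^sup>2 = 0"
      by (subst (asm) integral_nonneg_eq_0_iff_AE) auto
    then show ?thesis
      by eventually_elim (auto split: split_indicator)
  qed
  have "AE z in P. \<forall>n::nat. z \<in> prod_ball x0 (m + real n) \<longrightarrow> h z = 0"
    unfolding AE_all_countable using zero_on_ball \<open>0 < m\<close> by simp
  then show ?thesis
  proof eventually_elim
    case (elim z)
    obtain n :: nat where "max (dist x0 (fst z)) (dist x0 (snd z)) \<le> real n"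
      using real_arch_simple by blast
    then show ?case
      using elim[rule_format, of n] \<open>0 < m\<close> by (simp add: prod_ball_def)
  qed
qed

lemma Gcone_prod_pointed:
  fixes P :: "('a::metric_space \<times> 'a) measure"
  assumes "finite_measure P" "space P = UNIV" "\<And>r. prod_ball x0 r \<in> sets P"
    and "tail_function \<alpha>" "\<forall>r>0. 0 < \<alpha> r" "0 < m" "0 < measure P (prod_ball x0 m)"
    and "h \<in> Gcone_prod P x0 m \<alpha>" "(\<lambda>z. - h z) \<in> Gcone_prod P x0 m \<alpha>"
  shows "AE z in P. h z = 0"
  using assms(8,9) unfolding Gcone_prod_eq_dual_cone
  by (intro AE_zero_if_orthogonal_Fcone_prod[OF assms(1-7)] dual_cone_orthogonal)
     (auto simp: dual_cone_def)

section \<open>Marginals and pullbacks along the projections\<close>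

lemma (in pair_sigma_finite) L2_product_swap:
  assumes "L2 (M1 \<Otimes>\<^sub>M M2) f"
  shows "L2 (M2 \<Otimes>\<^sub>M M1) (\<lambda>z. f (snd z, fst z))"
proof -
  have [measurable]: "f \<in> borel_measurable (M1 \<Otimes>\<^sub>M M2)"
    using assms unfolding L2_def by simp
  have "(\<lambda>z. f (snd z, fst z)) \<in> borel_measurable (M2 \<Otimes>\<^sub>M M1)"
    by measurable
  then show ?thesis
    using assms integrable_product_swap[of "\<lambda>z. (f z)\<^sup>2"] unfolding L2_def
    by (simp add: case_prod_beta')
qed

lemma (in pair_sigma_finite) AE_product_swap:
  assumes "{z \<in> space (M1 \<Otimes>\<^sub>M M2). P z} \<in> sets (M1 \<Otimes>\<^sub>M M2)" "AE z in M1 \<Otimes>\<^sub>M M2. P z"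
  shows "AE z in M2 \<Otimes>\<^sub>M M1. P (snd z, fst z)"
proof -
  have "AE z in distr (M2 \<Otimes>\<^sub>M M1) (M1 \<Otimes>\<^sub>M M2) (\<lambda>(x, y). (y, x)). P z"
    using assms(2) by (subst (asm) distr_pair_swap)
  then show ?thesis
    using AE_distr_iff[OF measurable_pair_swap' assms(1)] by (simp add: case_prod_beta')
qed

lemma (in pair_sigma_finite) integral_product_swap':
  fixes h :: "_ \<Rightarrow> real"
  assumes "h \<in> borel_measurable (M1 \<Otimes>\<^sub>M M2)"
  shows "(\<integral>z. h (snd z, fst z) \<partial>(M2 \<Otimes>\<^sub>M M1)) = (\<integral>z. h z \<partial>(M1 \<Otimes>\<^sub>M M2))"
  using integral_product_swap[OF assms] by (simp add: case_prod_beta')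

lemma (in pair_prob_space) AE_comp_fst:
  assumes "{x \<in> space M1. P x} \<in> sets M1" "AE z in M1 \<Otimes>\<^sub>M M2. P (fst z)"
  shows "AE x in M1. P x"
  by (metis assms AE_distr_iff[OF measurable_fst assms(1), of M2] M2.distr_pair_fst)

lemma (in pair_prob_space) L2_comp_fst:
  assumes "L2 M1 g"
  shows "L2 (M1 \<Otimes>\<^sub>M M2) (\<lambda>z. g (fst z))"
proof -
  have [measurable]: "g \<in> borel_measurable M1"
    using assms unfolding L2_def by simp
  have "(\<lambda>z. g (fst z)) \<in> borel_measurable (M1 \<Otimes>\<^sub>M M2)"
    by measurable
  then show ?thesis
    using assms integrable_distr_eq[OF measurable_fst, of "\<lambda>x. (g x)\<^sup>2" M1 M2] unfolding L2_def
    by (simp add: M2.distr_pair_fst)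
qed

lemma (in pair_prob_space) L2_marginal_fst:
  assumes "L2 (M1 \<Otimes>\<^sub>M M2) f"
  shows "L2 M1 (\<lambda>x. \<integral>y. f (x, y) \<partial>M2)"
proof -
  have [measurable]: "f \<in> borel_measurable (M1 \<Otimes>\<^sub>M M2)"
    and int_sq: "integrable (M1 \<Otimes>\<^sub>M M2) (\<lambda>z. (f z)\<^sup>2)"
    using assms unfolding L2_def by auto
  have jensen: "AE x in M1. (\<integral>y. f (x, y) \<partial>M2)\<^sup>2 \<le> (\<integral>y. (f (x, y))\<^sup>2 \<partial>M2)"
    using AE_space AE_integrable_fst'[OF int_sq]
  proof eventually_elim
    case (elim x)
    have "(\<lambda>y. f (x, y)) \<in> borel_measurable M2"
      using elim(1) by measurable
    then have "integrable M2 (\<lambda>y. f (x, y))"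
      using elim(2) by (rule M2.square_integrable_imp_integrable)
    then show ?case
      using M2.variance_positive[of "\<lambda>y. f (x, y)"] M2.variance_eq[of "\<lambda>y. f (x, y)"] elim(2)
      by simp
  qed
  have "integrable M1 (\<lambda>x. (\<integral>y. f (x, y) \<partial>M2)\<^sup>2)"
    using integrable_fst'[OF int_sq]
  proof (rule Bochner_Integration.integrable_bound)
    show "(\<lambda>x. (\<integral>y. f (x, y) \<partial>M2)\<^sup>2) \<in> borel_measurable M1"
      by measurable
    show "AE x in M1. norm ((\<integral>y. f (x, y) \<partial>M2)\<^sup>2) \<le> norm (\<integral>y. (f (x, y))\<^sup>2 \<partial>M2)"
      using jensen by eventually_elim simp
  qed
  then show ?thesis
    unfolding L2_def by simp
qed

locale metric_pair_prob_space = pair_prob_space M1 M2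
  for M1 M2 :: "'a::metric_space measure" +
  assumes sets_M1: "sets M1 = sets borel" and sets_M2: "sets M2 = sets borel"
begin

lemma swap: "metric_pair_prob_space M2 M1"
  by (simp add: metric_pair_prob_space_def metric_pair_prob_space_axioms_def sets_M1 sets_M2
      pair_prob_space_def pair_sigma_finite_def M1.prob_space_axioms M2.prob_space_axioms
      M1.sigma_finite_measure_axioms M2.sigma_finite_measure_axioms)

lemma measurable_dist_M1 [measurable]: "(\<lambda>x. dist x0 x) \<in> borel_measurable M1"
  unfolding measurable_cong_sets[OF sets_M1 refl] by (intro borel_measurable_continuous_onI continuous_intros)

lemma measurable_dist_M2 [measurable]: "(\<lambda>x. dist x0 x) \<in> borel_measurable M2"
  unfolding measurable_cong_sets[OF sets_M2 refl] by (intro borel_measurable_continuous_onI continuous_intros)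

lemma space_pair: "space (M1 \<Otimes>\<^sub>M M2) = UNIV"
  using sets_eq_imp_space_eq[OF sets_M1] sets_eq_imp_space_eq[OF sets_M2]
  by (simp add: space_pair_measure)

lemma prod_ball_sets [measurable]: "prod_ball x0 r \<in> sets (M1 \<Otimes>\<^sub>M M2)"
proof -
  have "{z \<in> space (M1 \<Otimes>\<^sub>M M2). max (dist x0 (fst z)) (dist x0 (snd z)) \<le> r} \<in> sets (M1 \<Otimes>\<^sub>M M2)"
    by measurable
  then show ?thesis
    by (simp add: prod_ball_def space_pair)
qed

lemma compl_prod_ball_sets [measurable]: "- prod_ball x0 r \<in> sets (M1 \<Otimes>\<^sub>M M2)"
  using sets.compl_sets[OF prod_ball_sets] by (simp add: space_pair Compl_eq_Diff_UNIV)

lemma measure_prod_ball: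
  "measure (M1 \<Otimes>\<^sub>M M2) (prod_ball x0 r) = measure M1 {x. dist x0 x \<le> r} * measure M2 {x. dist x0 x \<le> r}"
proof -
  have "{x \<in> space M1. dist x0 x \<le> r} \<in> sets M1"
    by measurable
  moreover have "{x \<in> space M2. dist x0 x \<le> r} \<in> sets M2"
    by measurable
  ultimately have "{x. dist x0 x \<le> r} \<in> sets M1" "{x. dist x0 x \<le> r} \<in> sets M2"
    using sets_eq_imp_space_eq[OF sets_M1] sets_eq_imp_space_eq[OF sets_M2] by simp_all
  moreover have "prod_ball x0 r = {x. dist x0 x \<le> r} \<times> {x. dist x0 x \<le> r}"
    by (auto simp: prod_ball_def)
  ultimately show ?thesis
    by (simp add: measure_def M2.emeasure_pair_measure_Times enn2real_mult)
qed

lemma Fcone_prod_swap: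
  assumes "f \<in> Fcone_prod (M1 \<Otimes>\<^sub>M M2) x0 m \<alpha>"
  shows "(\<lambda>z. f (snd z, fst z)) \<in> Fcone_prod (M2 \<Otimes>\<^sub>M M1) x0 m \<alpha>"
proof -
  have L2_f: "L2 (M1 \<Otimes>\<^sub>M M2) f" and nonneg: "AE z in M1 \<Otimes>\<^sub>M M2. 0 \<le> f z"
    and tail: "\<And>r. m \<le> r \<Longrightarrow>
      (\<integral>z. indicator (- prod_ball x0 r) z * f z \<partial>(M1 \<Otimes>\<^sub>M M2)) \<le> \<alpha> r * (\<integral>z. f z \<partial>(M1 \<Otimes>\<^sub>M M2))"
    using assms unfolding Fcone_prod_iff by auto
  have [measurable]: "f \<in> borel_measurable (M1 \<Otimes>\<^sub>M M2)"
    using L2_f unfolding L2_def by simp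
  have "AE z in M2 \<Otimes>\<^sub>M M1. 0 \<le> f (snd z, fst z)"
    by (rule AE_product_swap[OF _ nonneg]) measurable
  moreover have "(\<integral>z. indicator (- prod_ball x0 r) z * f (snd z, fst z) \<partial>(M2 \<Otimes>\<^sub>M M1))
      \<le> \<alpha> r * (\<integral>z. f (snd z, fst z) \<partial>(M2 \<Otimes>\<^sub>M M1))" if "m \<le> r" for r
  proof -
    have "(\<lambda>z. indicator (- prod_ball x0 r) z * f (snd z, fst z))
        = (\<lambda>z. indicator (- prod_ball x0 r) (snd z, fst z) * f (snd z, fst z))"
      by (simp add: indicator_def prod_ball_swap)
    then show ?thesis
      using tail[OF that] integral_product_swap'[of "\<lambda>z. indicator (- prod_ball x0 r) z * f z"]
        integral_product_swap'[of f] by simp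
  qed
  ultimately show ?thesis
    unfolding Fcone_prod_iff using L2_product_swap[OF L2_f] by simp
qed

lemma Gcone_prod_swap:
  assumes "g \<in> Gcone_prod (M1 \<Otimes>\<^sub>M M2) x0 m \<alpha>"
  shows "(\<lambda>z. g (snd z, fst z)) \<in> Gcone_prod (M2 \<Otimes>\<^sub>M M1) x0 m \<alpha>"
proof -
  interpret swapped: metric_pair_prob_space M2 M1
    by (rule swap)
  have L2_g: "L2 (M1 \<Otimes>\<^sub>M M2) g"
    using assms unfolding Gcone_prod_def by simp
  have "0 \<le> (\<integral>z. f z * g (snd z, fst z) \<partial>(M2 \<Otimes>\<^sub>M M1))"
    if f: "f \<in> Fcone_prod (M2 \<Otimes>\<^sub>M M1) x0 m \<alpha>" for f
  proof -
    have [measurable]: "f \<in> borel_measurable (M2 \<Otimes>\<^sub>M M1)" "g \<in> borel_measurable (M1 \<Otimes>\<^sub>M M2)"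
      using f L2_g unfolding Fcone_prod_def L2_def by auto
    have "0 \<le> (\<integral>z. f (snd z, fst z) * g z \<partial>(M1 \<Otimes>\<^sub>M M2))"
      using assms swapped.Fcone_prod_swap[OF f] unfolding Gcone_prod_def by simp
    also have "\<dots> = (\<integral>z. f z * g (snd z, fst z) \<partial>(M2 \<Otimes>\<^sub>M M1))"
      using swapped.integral_product_swap'[of "\<lambda>z. f z * g (snd z, fst z)"] by simp
    finally show ?thesis .
  qed
  then show ?thesis
    unfolding Gcone_prod_def using L2_product_swap[OF L2_g] by simp
qed

lemma Fcone_marginal_fst:
  assumes \<alpha>'_nonneg: "\<forall>r\<ge>m. 0 \<le> \<alpha>' r"
    and f: "f \<in> Fcone_prod (M1 \<Otimes>\<^sub>M M2) x0 m \<alpha>"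
  shows "(\<lambda>x. \<integral>y. f (x, y) \<partial>M2) \<in> Fcone M1 x0 m \<alpha> \<alpha>'"
proof -
  define F where "F x = (\<integral>y. f (x, y) \<partial>M2)" for x
  have L2_f: "L2 (M1 \<Otimes>\<^sub>M M2) f" and nonneg: "AE z in M1 \<Otimes>\<^sub>M M2. 0 \<le> f z"
    and tail: "\<And>r. m \<le> r \<Longrightarrow>
      (\<integral>z. indicator (- prod_ball x0 r) z * f z \<partial>(M1 \<Otimes>\<^sub>M M2)) \<le> \<alpha> r * (\<integral>z. f z \<partial>(M1 \<Otimes>\<^sub>M M2))"
    using f unfolding Fcone_prod_iff by auto
  have [measurable]: "f \<in> borel_measurable (M1 \<Otimes>\<^sub>M M2)"
    using L2_f unfolding L2_def by simp
  have [measurable]: "F \<in> borel_measurable M1"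
    unfolding F_def[abs_def] by measurable
  have int_f: "integrable (M1 \<Otimes>\<^sub>M M2) f"
    using L2_f by (rule P.L2_imp_integrable)
  have F_nonneg: "AE x in M1. 0 \<le> F x"
    using AE_pair[OF nonneg] unfolding F_def by eventually_elim (rule integral_nonneg_AE)
  have integral_F: "(\<integral>x. F x \<partial>M1) = (\<integral>z. f z \<partial>(M1 \<Otimes>\<^sub>M M2))"
    unfolding F_def using integral_fst'[OF int_f] by simp
  have "(\<integral>x. indicator {x. r < dist x0 x} x * max (F x) 0 \<partial>M1) \<le> \<alpha> r * (\<integral>x. F x \<partial>M1)"
    if "m \<le> r" for r
  proof -
    have int_tail: "integrable (M1 \<Otimes>\<^sub>M M2) (\<lambda>z. indicator {x. r < dist x0 x} (fst z) * f z)"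
      by (rule Bochner_Integration.integrable_bound[OF int_f]) (auto split: split_indicator)
    have "(\<integral>x. indicator {x. r < dist x0 x} x * max (F x) 0 \<partial>M1)
        = (\<integral>x. (\<integral>y. indicator {x. r < dist x0 x} (fst (x, y)) * f (x, y) \<partial>M2) \<partial>M1)"
      using F_nonneg by (intro integral_cong_AE) (auto simp: F_def elim!: eventually_mono)
    also have "\<dots> = (\<integral>z. indicator {x. r < dist x0 x} (fst z) * f z \<partial>(M1 \<Otimes>\<^sub>M M2))"
      by (rule integral_fst'[OF int_tail])
    also have "\<dots> \<le> (\<integral>z. indicator (- prod_ball x0 r) z * f z \<partial>(M1 \<Otimes>\<^sub>M M2))"
      using int_tail nonneg
      by (intro integral_mono_AE Bochner_Integration.integrable_bound[OF int_f])
         (auto simp: prod_ball_def split: split_indicator elim!: eventually_mono)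
    also have "\<dots> \<le> \<alpha> r * (\<integral>x. F x \<partial>M1)"
      using tail[OF that] integral_F by simp
    finally show ?thesis .
  qed
  moreover have "(\<integral>x. indicator {x. r < dist x0 x} x * max (- F x) 0 \<partial>M1) \<le> \<alpha>' r * (\<integral>x. F x \<partial>M1)"
    if "m \<le> r" for r
  proof -
    have "(\<integral>x. indicator {x. r < dist x0 x} x * max (- F x) 0 \<partial>M1) = 0"
      using F_nonneg by (intro integral_eq_zero_AE) (auto elim!: eventually_mono)
    then show ?thesis
      using \<alpha>'_nonneg that integral_nonneg_AE[OF F_nonneg] by simp
  qed
  moreover have "AE x in M1. dist x0 x \<le> m \<longrightarrow> 0 \<le> F x"
    using F_nonneg by eventually_elim simp
  ultimately show ?thesis
    unfolding Fcone_def F_def[symmetric] using L2_marginal_fst[OF L2_f] by (simp add: F_def)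
qed

lemma Gcone_comp_fst:
  assumes \<alpha>'_nonneg: "\<forall>r\<ge>m. 0 \<le> \<alpha>' r"
    and g: "g \<in> Gcone M1 x0 m \<alpha> \<alpha>'"
  shows "(\<lambda>z. g (fst z)) \<in> Gcone_prod (M1 \<Otimes>\<^sub>M M2) x0 m \<alpha>"
proof -
  have L2_g: "L2 (M1 \<Otimes>\<^sub>M M2) (\<lambda>z. g (fst z))"
    using g unfolding Gcone_def by (simp add: L2_comp_fst)
  have "0 \<le> (\<integral>z. f z * g (fst z) \<partial>(M1 \<Otimes>\<^sub>M M2))"
    if f: "f \<in> Fcone_prod (M1 \<Otimes>\<^sub>M M2) x0 m \<alpha>" for f
  proof -
    have int: "integrable (M1 \<Otimes>\<^sub>M M2) (\<lambda>z. f z * g (fst z))"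
      using f L2_g unfolding Fcone_prod_def by (auto intro: L2_integrable_mult)
    have "(\<integral>z. f z * g (fst z) \<partial>(M1 \<Otimes>\<^sub>M M2)) = (\<integral>x. (\<integral>y. f (x, y) \<partial>M2) * g x \<partial>M1)"
      using integral_fst'[OF int, symmetric] by simp
    also have "\<dots> \<ge> 0"
      using g Fcone_marginal_fst[OF \<alpha>'_nonneg f] unfolding Gcone_def by auto
    finally show ?thesis .
  qed
  then show ?thesis
    unfolding Gcone_prod_def using L2_g by simp
qed

lemma Fcone_marginal_snd:
  assumes "\<forall>r\<ge>m. 0 \<le> \<alpha>' r" "f \<in> Fcone_prod (M1 \<Otimes>\<^sub>M M2) x0 m \<alpha>"
  shows "(\<lambda>y. \<integral>x. f (x, y) \<partial>M1) \<in> Fcone M2 x0 m \<alpha> \<alpha>'"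
proof -
  interpret swapped: metric_pair_prob_space M2 M1
    by (rule swap)
  show ?thesis
    using swapped.Fcone_marginal_fst[OF assms(1) Fcone_prod_swap[OF assms(2)]] by simp
qed

lemma Gcone_comp_snd:
  assumes "\<forall>r\<ge>m. 0 \<le> \<alpha>' r" "g \<in> Gcone M2 x0 m \<alpha> \<alpha>'"
  shows "(\<lambda>z. g (snd z)) \<in> Gcone_prod (M1 \<Otimes>\<^sub>M M2) x0 m \<alpha>"
proof -
  interpret swapped: metric_pair_prob_space M2 M1
    by (rule swap)
  show ?thesis
    using swapped.Gcone_prod_swap[OF swapped.Gcone_comp_fst[OF assms]] by simp
qed

lemma Gcone_prod_pair_pointed:
  assumes "tail_function \<alpha>" "\<forall>r>0. 0 < \<alpha> r" "0 < m"
    and "0 < measure M1 {x. dist x0 x \<le> m}" "0 < measure M2 {x. dist x0 x \<le> m}"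
    and "h \<in> Gcone_prod (M1 \<Otimes>\<^sub>M M2) x0 m \<alpha>" "(\<lambda>z. - h z) \<in> Gcone_prod (M1 \<Otimes>\<^sub>M M2) x0 m \<alpha>"
  shows "AE z in M1 \<Otimes>\<^sub>M M2. h z = 0"
  using assms(4,5) measure_prod_ball[of x0 m]
  by (intro Gcone_prod_pointed[OF P.finite_measure_axioms space_pair prod_ball_sets assms(1-3) _ assms(6,7)])
     simp

lemma hilbert_dist_comp_fst_le:
  assumes "tail_function \<alpha>" "\<forall>r>0. 0 < \<alpha> r" "0 < m" "\<forall>r\<ge>m. 0 \<le> \<alpha>' r"
    and "0 < measure M1 {x. dist x0 x \<le> m}" "0 < measure M2 {x. dist x0 x \<le> m}"
    and "g' \<in> Gcone M1 x0 m \<alpha> \<alpha>'"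
  shows "hilbert_dist (M1 \<Otimes>\<^sub>M M2) (Gcone_prod (M1 \<Otimes>\<^sub>M M2) x0 m \<alpha>) (\<lambda>z. g (fst z)) (\<lambda>z. g' (fst z))
    \<le> hilbert_dist M1 (Gcone M1 x0 m \<alpha> \<alpha>') g g'"
proof (rule hilbert_dist_pullback_le)
  have [measurable]: "g' \<in> borel_measurable M1"
    using assms(7) unfolding Gcone_def L2_def by simp
  show "AE x in M1. g' x = 0" if "AE z in M1 \<Otimes>\<^sub>M M2. g' (fst z) = 0"
    using that by (rule AE_comp_fst[rotated]) measurable
qed (use assms Gcone_comp_fst Gcone_cmult Gcone_prod_cmult Gcone_prod_add Gcone_prod_pair_pointed in auto)

lemma hilbert_dist_comp_snd_le:
  assumes "tail_function \<alpha>" "\<forall>r>0. 0 < \<alpha> r" "0 < m" "\<forall>r\<ge>m. 0 \<le> \<alpha>' r"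
    and "0 < measure M1 {x. dist x0 x \<le> m}" "0 < measure M2 {x. dist x0 x \<le> m}"
    and "g' \<in> Gcone M2 x0 m \<alpha> \<alpha>'"
  shows "hilbert_dist (M1 \<Otimes>\<^sub>M M2) (Gcone_prod (M1 \<Otimes>\<^sub>M M2) x0 m \<alpha>) (\<lambda>z. g (snd z)) (\<lambda>z. g' (snd z))
    \<le> hilbert_dist M2 (Gcone M2 x0 m \<alpha> \<alpha>') g g'"
proof (rule hilbert_dist_pullback_le)
  interpret swapped: metric_pair_prob_space M2 M1
    by (rule swap)
  have [measurable]: "g' \<in> borel_measurable M2"
    using assms(7) unfolding Gcone_def L2_def by simp
  show "AE y in M2. g' y = 0" if "AE z in M1 \<Otimes>\<^sub>M M2. g' (snd z) = 0"
  proof (rule swapped.AE_comp_fst)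
    show "AE z in M2 \<Otimes>\<^sub>M M1. g' (fst z) = 0"
      using AE_product_swap[OF _ that] by simp
  qed measurable
qed (use assms Gcone_comp_snd Gcone_cmult Gcone_prod_cmult Gcone_prod_add Gcone_prod_pair_pointed in auto)

end

theorem lemma5p6:
  fixes \<mu> \<nu> :: "'a::polish_space measure" and x0 :: 'a and m :: real
    and \<alpha> \<alpha>' :: "real \<Rightarrow> real"
  assumes "prob_space \<mu>" and "sets \<mu> = sets borel"
    and "prob_space \<nu>" and "sets \<nu> = sets borel"
    and "0 < m"
    and "0 < measure \<mu> {x. dist x0 x \<le> m}" and "0 < measure \<nu> {x. dist x0 x \<le> m}"
    and "tail_function \<alpha>" and "\<forall>r>0. 0 < \<alpha> r"
    and "tail_function \<alpha>'"
  shows "(\<forall>f\<in>Fcone_prod (\<mu> \<Otimes>\<^sub>M \<nu>) x0 m \<alpha>.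
            (\<lambda>x. \<integral>y. f (x, y) \<partial>\<nu>) \<in> Fcone \<mu> x0 m \<alpha> \<alpha>' \<and>
            (\<lambda>y. \<integral>x. f (x, y) \<partial>\<mu>) \<in> Fcone \<nu> x0 m \<alpha> \<alpha>')
    \<and> (\<forall>g\<in>Gcone \<mu> x0 m \<alpha> \<alpha>'. (\<lambda>z. g (fst z)) \<in> Gcone_prod (\<mu> \<Otimes>\<^sub>M \<nu>) x0 m \<alpha>)
    \<and> (\<forall>g\<in>Gcone \<mu> x0 m \<alpha> \<alpha>'. \<forall>g'\<in>Gcone \<mu> x0 m \<alpha> \<alpha>'.
         hilbert_dist (\<mu> \<Otimes>\<^sub>M \<nu>) (Gcone_prod (\<mu> \<Otimes>\<^sub>M \<nu>) x0 m \<alpha>) (\<lambda>z. g (fst z)) (\<lambda>z. g' (fst z))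
         \<le> hilbert_dist \<mu> (Gcone \<mu> x0 m \<alpha> \<alpha>') g g')
    \<and> (\<forall>g\<in>Gcone \<nu> x0 m \<alpha> \<alpha>'. (\<lambda>z. g (snd z)) \<in> Gcone_prod (\<mu> \<Otimes>\<^sub>M \<nu>) x0 m \<alpha>)
    \<and> (\<forall>g\<in>Gcone \<nu> x0 m \<alpha> \<alpha>'. \<forall>g'\<in>Gcone \<nu> x0 m \<alpha> \<alpha>'.
         hilbert_dist (\<mu> \<Otimes>\<^sub>M \<nu>) (Gcone_prod (\<mu> \<Otimes>\<^sub>M \<nu>) x0 m \<alpha>) (\<lambda>z. g (snd z)) (\<lambda>z. g' (snd z))
         \<le> hilbert_dist \<nu> (Gcone \<nu> x0 m \<alpha> \<alpha>') g g')"
proof -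
  interpret metric_pair_prob_space \<mu> \<nu>
    using assms(1-4)
    by (simp add: metric_pair_prob_space_def metric_pair_prob_space_axioms_def pair_prob_space_def
        pair_sigma_finite_def prob_space_imp_sigma_finite)
  have \<alpha>'_nonneg: "\<forall>r\<ge>m. 0 \<le> \<alpha>' r"
    using assms(5,10) tail_function_nonneg by force
  show ?thesis
    using Fcone_marginal_fst[OF \<alpha>'_nonneg] Fcone_marginal_snd[OF \<alpha>'_nonneg]
      Gcone_comp_fst[OF \<alpha>'_nonneg] Gcone_comp_snd[OF \<alpha>'_nonneg]
      hilbert_dist_comp_fst_le[OF assms(8,9,5) \<alpha>'_nonneg assms(6,7)]
      hilbert_dist_comp_snd_le[OF assms(8,9,5) \<alpha>'_nonneg assms(6,7)]
    by blast
qed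

end
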